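(* Fix $a\ge0$. For every $x\ge0$ and $\varepsilon>0$, almost surely: (i) $t\mapsto R^{(x+\varepsilon)}(t)-R^{(x)}(t)$ is non-increasing on $[0,\infty)$ and takes values in $[-\varepsilon,0]$; (ii) $t\mapsto U^{(x+\varepsilon)}(t)-U^{(x)}(t)$ is non-increasing on $[0,\infty)$ and takes values in $[0,\varepsilon]$; (iii) $t\mapsto L^{(x+\varepsilon)}(t)-L^{(x)}(t)$ is non-decreasing on $[0,\infty)$ and takes values in $[0,\varepsilon]$.
   Context: $X$ is a real-valued Lévy process with $X(0)=0$ under $\mathbb{P}$; $N_r$ is an independent Poisson process of rate $r>0$ with arrival times $0<T_1<T_2<\cdots$, $T_0:=0$. For $y\ge0$ let $X^{(y)}:=X+y$. Given $a\ge0$, $(U^{(y)},L^{(y)},R^{(y)})$ denotes the periodic-classical barrier strategy at $a$ driven by $X^{(y)}$, constructed recursively: $U^{(y)}=X^{(y)}-L^{(y)}+R^{(y)}$; $L^{(y)}(0)=0$ and $L^{(y)}$ is constant on each $[T_k,T_{k+1})$; on $[T_k,T_{k+1})$, with $Y(t):=U^{(y)}(T_k)+X(t)-X(T_k)$ (where $U^{(y)}(T_0):=y$), $R^{(y)}(t)=R^{(y)}(T_k)+\max\{0,\sup_{s\in[T_k,t]}(-Y(s))\}$ (with $R^{(y)}(T_0):=0$) and $U^{(y)}(t)=Y(t)+R^{(y)}(t)-R^{(y)}(T_k)$; at $T_{k+1}$, $L^{(y)}$ jumps by $(U^{(y)}(T_{k+1}-)-a)^+$ and $U^{(y)}(T_{k+1})=\min\{U^{(y)}(T_{k+1}-),a\}$.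 Thus $R^{(y)}$ is the cumulative capital injection (classical reflection at $0$) and $L^{(y)}$ the cumulative periodic dividend (reflection at $a$ at Poisson times). *)

theory Defs
  imports "HOL-Probability.Probability"
begin

definition levy_process :: "'w measure \<Rightarrow> ('w \<Rightarrow> real \<Rightarrow> real) \<Rightarrow> bool" where
  "levy_process M X \<longleftrightarrow>
     prob_space M \<and>
     (\<forall>t. (\<lambda>\<omega>. X \<omega> t) \<in> borel_measurable M) \<and>
     (AE \<omega> in M. X \<omega> 0 = 0) \<and>
     (\<forall>(n::nat) (\<tau>::nat \<Rightarrow> real). 0 \<le> \<tau> 0 \<and> (\<forall>i<n. \<tau> i \<le> \<tau> (Suc i)) \<longrightarrow>
        prob_space.indep_vars M (\<lambda>_. borel) (\<lambda>i \<omega>. X \<omega> (\<tau> (Suc i)) - X \<omega> (\<tau> i)) {..<n}) \<and>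
     (\<forall>s t. 0 \<le> s \<longrightarrow> 0 \<le> t \<longrightarrow>
        distr M borel (\<lambda>\<omega>. X \<omega> (t + s) - X \<omega> t) = distr M borel (\<lambda>\<omega>. X \<omega> s)) \<and>
     (AE \<omega> in M. \<forall>t\<ge>0. continuous (at_right t) (X \<omega>) \<and>
                        (0 < t \<longrightarrow> (\<exists>l. (X \<omega> \<longlongrightarrow> l) (at_left t))))"

definition poisson_arrivals :: "'w measure \<Rightarrow> real \<Rightarrow> ('w \<Rightarrow> nat \<Rightarrow> real) \<Rightarrow> bool" where
  "poisson_arrivals M r T \<longleftrightarrow>
     (\<forall>\<omega>\<in>space M. T \<omega> 0 = 0) \<and>
     prob_space.indep_vars M (\<lambda>_. borel) (\<lambda>k \<omega>. T \<omega> (Suc k) - T \<omega> k) UNIV \<and>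
     (\<forall>k. distributed M lborel (\<lambda>\<omega>. T \<omega> (Suc k) - T \<omega> k) (exponential_density r))"

text \<open>Increment of the capital injection since the last arrival time s0, given
  the state u = U(s0): max{0, sup_{s in [s0,t]} -(u + x s - x s0)}.\<close>
definition seg_R :: "(real \<Rightarrow> real) \<Rightarrow> real \<Rightarrow> real \<Rightarrow> real \<Rightarrow> real" where
  "seg_R x s0 u t = max 0 (SUP s\<in>{s0..t}. - (u + x s - x s0))"

definition seg_U :: "(real \<Rightarrow> real) \<Rightarrow> real \<Rightarrow> real \<Rightarrow> real \<Rightarrow> real" where
  "seg_U x s0 u t = u + x t - x s0 + seg_R x s0 u t"

text \<open>State (U(T_k), R(T_k), L(T_k)) at the k-th arrival time, for the path x,
  arrival times T, barrier a and initial capital y.\<close>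
fun pc_state :: "(real \<Rightarrow> real) \<Rightarrow> (nat \<Rightarrow> real) \<Rightarrow> real \<Rightarrow> real \<Rightarrow> nat \<Rightarrow> real \<times> real \<times> real" where
  "pc_state x T a y 0 = (y, 0, 0)"
| "pc_state x T a y (Suc k) =
     (case pc_state x T a y k of (u, rr, l) \<Rightarrow>
        (let um = Lim (at_left (T (Suc k))) (seg_U x (T k) u);
             rm = Lim (at_left (T (Suc k))) (seg_R x (T k) u)
         in (min um a, rr + rm, l + max 0 (um - a))))"

definition pc_index :: "(nat \<Rightarrow> real) \<Rightarrow> real \<Rightarrow> nat" where
  "pc_index T t = (LEAST k. t < T (Suc k))"

definition pc_U :: "(real \<Rightarrow> real) \<Rightarrow> (nat \<Rightarrow> real) \<Rightarrow> real \<Rightarrow> real \<Rightarrow> real \<Rightarrow> real" where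
  "pc_U x T a y t = (let k = pc_index T t in
     case pc_state x T a y k of (u, rr, l) \<Rightarrow> seg_U x (T k) u t)"

definition pc_R :: "(real \<Rightarrow> real) \<Rightarrow> (nat \<Rightarrow> real) \<Rightarrow> real \<Rightarrow> real \<Rightarrow> real \<Rightarrow> real" where
  "pc_R x T a y t = (let k = pc_index T t in
     case pc_state x T a y k of (u, rr, l) \<Rightarrow> rr + seg_R x (T k) u t)"

definition pc_L :: "(real \<Rightarrow> real) \<Rightarrow> (nat \<Rightarrow> real) \<Rightarrow> real \<Rightarrow> real \<Rightarrow> real \<Rightarrow> real" where
  "pc_L x T a y t = (let k = pc_index T t in
     case pc_state x T a y k of (u, rr, l) \<Rightarrow> l)"

end

theory Submission
  imports Defs
begin

text \<open>Between two arrival times both strategies reflect the same path at 0, so the capital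
  injected since the last arrival is the positive part of the running drawdown of the path beyond
  the capital held at that arrival. For two capitals \<open>u \<le> u'\<close> the difference of these positive
  parts lies in \<open>[u - u', 0]\<close> and is non-increasing in the drawdown, hence in time: the capital
  gap and the injection gap both decrease. At an arrival the map \<open>min _ a\<close> can only shrink the
  capital gap, and what it removes is paid out as additional dividend, so the dividend gap
  increases. Finally \<open>U = y + X - L + R\<close> makes the three gaps add up to the initial gap,
  \<open>\<Delta>U + \<Delta>L - \<Delta>R = \<epsilon>\<close>, which together with their signs at time 0 yields the bounds.
  Almost surely the Levy path is cadlag and the Poisson arrival times increase strictly to
  infinity, and this is all the pathwise argument uses.\<close>

section \<open>Cadlag paths\<close>

definition cadlag :: "(real \<Rightarrow> real) \<Rightarrow> bool" where
  "cadlag p \<longleftrightarrow> (\<forall>t\<ge>0. continuous (at_right t) p \<and> (0 < t \<longrightarrow> (\<exists>l. (p \<longlongrightarrow> l) (at_left t))))"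

lemma cadlag_locally_bounded:
  assumes "cadlag p" "0 \<le> t"
  obtains e B where "0 < e" "\<And>s. 0 \<le> s \<Longrightarrow> dist s t < e \<Longrightarrow> \<bar>p s\<bar> \<le> B"
proof -
  have "(p \<longlongrightarrow> p t) (at_right t)"
    using assms by (simp add: cadlag_def continuous_within)
  then have "eventually (\<lambda>s. dist (p s) (p t) < 1) (at_right t)"
    by (rule tendstoD) simp
  then obtain b where b: "t < b" "\<And>s. t < s \<Longrightarrow> s < b \<Longrightarrow> \<bar>p s\<bar> \<le> \<bar>p t\<bar> + 1"
    by (force simp: eventually_at_right_field dist_real_def)
  obtain c B where c: "c < t" "\<And>s. 0 \<le> s \<Longrightarrow> c < s \<Longrightarrow> s < t \<Longrightarrow> \<bar>p s\<bar> \<le> B"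
  proof (cases "t = 0")
    case True
    then show ?thesis using that[of "-1" 0] by simp
  next
    case False
    with assms obtain l where "(p \<longlongrightarrow> l) (at_left t)"
      by (auto simp: cadlag_def)
    then have "eventually (\<lambda>s. dist (p s) l < 1) (at_left t)"
      by (rule tendstoD) simp
    then show ?thesis
      using that[of _ "\<bar>l\<bar> + 1"] by (force simp: eventually_at_left_field dist_real_def)
  qed
  show ?thesis
  proof (rule that[of "min (b - t) (t - c)" "max (\<bar>p t\<bar> + 1) B"])
    fix s assume "0 \<le> s" "dist s t < min (b - t) (t - c)"
    then consider "s = t" | "t < s" "s < b" | "c < s" "s < t" "0 \<le> s"
      by (fastforce simp: dist_real_def)
    then show "\<bar>p s\<bar> \<le> max (\<bar>p t\<bar> + 1) B"
      by cases (use b c in fastforce)+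
  qed (use b c in simp)
qed

lemma cadlag_bounded_Icc:
  assumes "cadlag p" "0 \<le> s0"
  shows "bounded (p ` {s0..s1})"
proof -
  have "\<exists>e B. 0 < e \<and> (\<forall>s. 0 \<le> s \<longrightarrow> dist s t < e \<longrightarrow> \<bar>p s\<bar> \<le> B)" if "t \<in> {s0..s1}" for t
    using cadlag_locally_bounded[OF assms(1), of t] that assms(2) by (metis atLeastAtMost_iff order_trans)
  then obtain e B where eB: "\<And>t. t \<in> {s0..s1} \<Longrightarrow> 0 < e t"
    "\<And>t s. t \<in> {s0..s1} \<Longrightarrow> 0 \<le> s \<Longrightarrow> dist s t < e t \<Longrightarrow> \<bar>p s\<bar> \<le> B t"
    by metis
  have cover: "{s0..s1} \<subseteq> (\<Union>t\<in>{s0..s1}. ball t (e t))"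
    using eB(1) by force
  obtain C where C: "C \<subseteq> {s0..s1}" "finite C" "{s0..s1} \<subseteq> (\<Union>t\<in>C. ball t (e t))"
    by (rule compactE_image[OF compact_Icc _ cover]) auto
  have "\<bar>p s\<bar> \<le> Max (B ` C)" if s: "s \<in> {s0..s1}" for s
  proof -
    obtain t where "t \<in> C" "dist s t < e t"
      using C(3) s by (auto simp: dist_commute)
    then have "\<bar>p s\<bar> \<le> B t"
      using eB(2) C(1) s assms(2) by auto
    also have "B t \<le> Max (B ` C)"
      using C(2) \<open>t \<in> C\<close> by simp
    finally show ?thesis .
  qed
  then show ?thesis
    unfolding bounded_real by blast
qed

section \<open>Reflection on an inter-arrival interval\<close>

definition drawdown :: "(real \<Rightarrow> real) \<Rightarrow> real \<Rightarrow> real \<Rightarrow> real" where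
  "drawdown p s0 t = (SUP s\<in>{s0..t}. p s0 - p s)"

lemma bdd_above_drawdown_image:
  fixes p :: "real \<Rightarrow> real"
  assumes "bdd_below (p ` {s0..s1})" "t \<le> s1"
  shows "bdd_above ((\<lambda>s. p s0 - p s) ` {s0..t})"
proof -
  obtain m where m: "\<forall>s\<in>{s0..s1}. m \<le> p s"
    using assms(1) by (auto simp: bdd_below_def)
  have "p s0 - p s \<le> p s0 - m" if "s \<in> {s0..t}" for s
    using m that assms(2) by auto
  then show ?thesis
    by (rule bdd_aboveI2)
qed

lemma seg_R_eq_drawdown:
  assumes "bdd_below (p ` {s0..s1})" "s0 \<le> t" "t \<le> s1"
  shows "seg_R p s0 u t = max 0 (drawdown p s0 t - u)"
proof -
  have "(SUP s\<in>{s0..t}. - (u + p s - p s0)) = (SUP s\<in>{s0..t}. - u + (p s0 - p s))"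
    by (simp add: algebra_simps)
  also have "\<dots> = - u + drawdown p s0 t"
    unfolding drawdown_def
    using assms by (intro Sup_add_eq bdd_above_drawdown_image) auto
  finally show ?thesis
    by (simp add: seg_R_def)
qed

lemma drawdown_mono:
  assumes "bdd_below (p ` {s0..s1})" "s0 \<le> t" "t \<le> t'" "t' \<le> s1"
  shows "drawdown p s0 t \<le> drawdown p s0 t'"
  unfolding drawdown_def
  using assms by (intro cSUP_subset_mono bdd_above_drawdown_image) auto

lemma drawdown_left_limit:
  assumes "bdd_below (p ` {s0..s1})" "s0 < s1"
  obtains D where "(drawdown p s0 \<longlongrightarrow> D) (at_left s1)"
    and "\<And>t. s0 \<le> t \<Longrightarrow> t < s1 \<Longrightarrow> drawdown p s0 t \<le> D"
proof -
  define f where "f t = drawdown p s0 (max s0 t)" for t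
  obtain K where K: "\<forall>s\<in>{s0..s1}. p s0 - p s \<le> K"
    using bdd_above_drawdown_image[OF assms(1) order_refl] by (auto simp: bdd_above_def)
  have f_mono: "f t \<le> f t'" if "t \<le> t'" "t' < s1" for t t'
    unfolding f_def using assms that by (intro drawdown_mono) auto
  have "(f \<longlongrightarrow> Sup (f ` ({..<s1} \<inter> UNIV))) (at s1 within ({..<s1} \<inter> UNIV))"
  proof (rule Lim_left_bound)
    fix t assume "t < s1"
    then show "f t \<le> K"
      unfolding f_def drawdown_def using assms K by (intro cSUP_least) auto
  qed (use f_mono in auto)
  then have lim: "(f \<longlongrightarrow> Sup (f ` {..<s1})) (at_left s1)"
    by simp
  moreover have "eventually (\<lambda>t. f t = drawdown p s0 t) (at_left s1)"
    using eventually_at_left_real[OF assms(2)] by eventually_elim (simp add: f_def)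
  ultimately have "(drawdown p s0 \<longlongrightarrow> Sup (f ` {..<s1})) (at_left s1)"
    by (rule Lim_transform_eventually)
  moreover have "drawdown p s0 t \<le> Sup (f ` {..<s1})" if "s0 \<le> t" "t < s1" for t
  proof (rule tendsto_lowerbound[OF lim])
    show "eventually (\<lambda>t'. drawdown p s0 t \<le> f t') (at_left s1)"
      using eventually_at_left_real[OF that(2)]
      by eventually_elim (use f_mono[of t] that in \<open>auto simp: f_def\<close>)
  qed simp
  ultimately show ?thesis
    using that by blast
qed

lemma seg_R_left_limit:
  assumes "bdd_below (p ` {s0..s1})" "s0 < s1" "(drawdown p s0 \<longlongrightarrow> D) (at_left s1)"
  shows "(seg_R p s0 u \<longlongrightarrow> max 0 (D - u)) (at_left s1)"
proof -
  have "((\<lambda>t. max 0 (drawdown p s0 t - u)) \<longlongrightarrow> max 0 (D - u)) (at_left s1)"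
    by (intro tendsto_intros assms(3))
  moreover have "eventually (\<lambda>t. max 0 (drawdown p s0 t - u) = seg_R p s0 u t) (at_left s1)"
    using eventually_at_left_real[OF assms(2)]
    by eventually_elim (use assms(1) in \<open>simp add: seg_R_eq_drawdown\<close>)
  ultimately show ?thesis
    by (rule Lim_transform_eventually)
qed

lemma seg_U_left_limit:
  assumes "bdd_below (p ` {s0..s1})" "s0 < s1" "(drawdown p s0 \<longlongrightarrow> D) (at_left s1)"
    and "(p \<longlongrightarrow> l) (at_left s1)"
  shows "(seg_U p s0 u \<longlongrightarrow> u + l - p s0 + max 0 (D - u)) (at_left s1)"
  unfolding seg_U_def[abs_def]
  by (intro tendsto_intros seg_R_left_limit assms)

lemma reflection_gap_bounds:
  fixes d u u' :: real
  assumes "u \<le> u'"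
  shows "u - u' \<le> max 0 (d - u') - max 0 (d - u)" "max 0 (d - u') - max 0 (d - u) \<le> 0"
  using assms by auto

lemma reflection_gap_antimono:
  fixes d d' u u' :: real
  assumes "u \<le> u'" "d \<le> d'"
  shows "max 0 (d' - u') - max 0 (d' - u) \<le> max 0 (d - u') - max 0 (d - u)"
  using assms by auto

section \<open>Arrival times\<close>

definition arrival_times :: "(nat \<Rightarrow> real) \<Rightarrow> bool" where
  "arrival_times T \<longleftrightarrow> T 0 = 0 \<and> strict_mono T \<and> filterlim T at_top sequentially"

lemma pc_index_eq:
  assumes "strict_mono T" "T k \<le> t" "t < T (Suc k)"
  shows "pc_index T t = k"
  unfolding pc_index_def
proof (rule Least_equality)
  show "k \<le> j" if "t < T (Suc j)" for j
  proof (rule ccontr)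
    assume "\<not> k \<le> j"
    then have "T (Suc j) \<le> T k"
      using assms(1) by (simp add: strict_mono_less_eq)
    then show False
      using that assms(2) by simp
  qed
qed (rule assms(3))

lemma arrival_times_segment:
  assumes "arrival_times T" "0 \<le> t"
  obtains k where "T k \<le> t" "t < T (Suc k)"
proof -
  have "eventually (\<lambda>n. t + 1 \<le> T n) sequentially"
    using assms(1) by (simp add: arrival_times_def filterlim_at_top)
  then obtain N where "t + 1 \<le> T N"
    by (auto simp: eventually_sequentially)
  then have ex: "\<exists>n. t < T n"
    by (auto intro: exI[of _ N])
  define n where "n = (LEAST n. t < T n)"
  have "t < T n"
    unfolding n_def using ex by (rule LeastI_ex)
  moreover have "n \<noteq> 0"
    using \<open>t < T n\<close> assms by (metis arrival_times_def not_less)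
  then obtain k where "n = Suc k"
    using not0_implies_Suc by blast
  moreover have "T k \<le> t"
    using not_less_Least[of k "\<lambda>n. t < T n"] \<open>n = Suc k\<close> by (simp add: n_def)
  ultimately show ?thesis
    using that by blast
qed

lemma antimono_by_segments:
  fixes f :: "real \<Rightarrow> real"
  assumes T: "arrival_times T"
    and within: "\<And>k s t. T k \<le> s \<Longrightarrow> s \<le> t \<Longrightarrow> t < T (Suc k) \<Longrightarrow> f t \<le> f s"
    and across: "\<And>k t. T k \<le> t \<Longrightarrow> t < T (Suc k) \<Longrightarrow> f (T (Suc k)) \<le> f t"
    and "0 \<le> s" "s \<le> t"
  shows "f t \<le> f s"
proof -
  have T0: "T 0 = 0" and T_less: "\<And>k. T k < T (Suc k)"
    using T by (auto simp: arrival_times_def strict_mono_Suc_iff)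
  have "0 \<le> t"
    using \<open>0 \<le> s\<close> \<open>s \<le> t\<close> by linarith
  then obtain k where "T k \<le> t" "t < T (Suc k)"
    by (rule arrival_times_segment[OF T])
  then show ?thesis
    using \<open>s \<le> t\<close>
  proof (induction k arbitrary: t)
    case 0
    then show ?case
      using within[of 0 s t] T0 \<open>0 \<le> s\<close> by simp
  next
    case (Suc k)
    show ?case
    proof (cases "T (Suc k) \<le> s")
      case True
      then show ?thesis
        using within[of "Suc k" s t] Suc.prems by simp
    next
      case False
      define t' where "t' = max s (T k)"
      have t': "T k \<le> t'" "t' < T (Suc k)" "s \<le> t'"
        using False T_less[of k] by (auto simp: t'_def)
      have "f t \<le> f (T (Suc k))"
        using within[of "Suc k" "T (Suc k)" t] Suc.prems by simp
      also have "\<dots> \<le> f t'"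
        using across[of k t'] t' by simp
      also have "\<dots> \<le> f s"
        using Suc.IH[of t'] t' by simp
      finally show ?thesis .
    qed
  qed
qed

lemma (in prob_space) AE_frequently_gt_indep:
  fixes G :: "nat \<Rightarrow> 'a \<Rightarrow> real"
  assumes ind: "indep_vars (\<lambda>_. borel) G UNIV"
    and le: "\<And>k. \<P>(\<omega> in M. G k \<omega> \<le> c) \<le> q" and "q < 1"
  shows "AE \<omega> in M. \<forall>n. \<exists>k\<ge>n. c < G k \<omega>"
proof -
  have meas[measurable]: "G k \<in> borel_measurable M" for k
    using ind by (simp add: indep_vars_def)
  have q: "0 \<le> q"
    using le[of 0] measure_nonneg order_trans by blast
  have "AE \<omega> in M. \<exists>k\<ge>n. c < G k \<omega>" for n
  proof (rule AE_I')
    define N where "N = {\<omega> \<in> space M. \<forall>k\<ge>n. G k \<omega> \<le> c}"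
    have N_sets: "N \<in> sets M"
      unfolding N_def by measurable
    have "measure M N \<le> q ^ Suc m" for m
    proof -
      define J where "J = {n..n + m}"
      have "N \<subseteq> (\<Inter>i\<in>J. G i -` {..c} \<inter> space M)"
        unfolding N_def J_def by auto
      then have "measure M N \<le> prob (\<Inter>i\<in>J. G i -` {..c} \<inter> space M)"
        by (intro finite_measure_mono) (auto simp: J_def)
      also have "\<dots> = (\<Prod>i\<in>J. prob (G i -` {..c} \<inter> space M))"
        by (rule indep_varsD[OF ind]) (auto simp: J_def)
      also have "\<dots> \<le> (\<Prod>i\<in>J. q)"
        using le by (intro prod_mono) (simp add: vimage_def Int_def conj_commute)
      also have "\<dots> = q ^ Suc m"
        by (simp add: J_def)
      finally show ?thesis .
    qed
    moreover have "(\<lambda>m. q ^ Suc m) \<longlonglongrightarrow> 0"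
      using q \<open>q < 1\<close> by (intro LIMSEQ_Suc LIMSEQ_power_zero) simp
    ultimately have "measure M N \<le> 0"
      by (intro LIMSEQ_le_const[where X = "\<lambda>m. q ^ Suc m"]) auto
    then show "N \<in> null_sets M"
      using N_sets measure_nonneg[of M N] by (auto simp: emeasure_eq_measure)
    show "{\<omega> \<in> space M. \<not> (\<exists>k\<ge>n. c < G k \<omega>)} \<subseteq> N"
      unfolding N_def by auto
  qed
  then show ?thesis
    by (simp add: AE_all_countable)
qed

lemma filterlim_at_top_of_frequent_gaps:
  fixes T :: "nat \<Rightarrow> real"
  assumes "incseq T" "0 < c" and gaps: "\<forall>n. \<exists>k\<ge>n. c < T (Suc k) - T k"
  shows "filterlim T at_top sequentially"
proof -
  have reach: "\<exists>k. T 0 + real m * c \<le> T k" for m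
  proof (induction m)
    case (Suc m)
    then obtain k where k: "T 0 + real m * c \<le> T k"
      by blast
    obtain k' where "k \<le> k'" "c < T (Suc k') - T k'"
      using gaps by blast
    moreover have "T k \<le> T k'"
      using \<open>incseq T\<close> \<open>k \<le> k'\<close> by (simp add: incseqD)
    ultimately have "T 0 + real (Suc m) * c \<le> T (Suc k')"
      using k by (simp add: algebra_simps)
    then show ?case
      by blast
  qed auto
  have unbounded: "\<exists>k. N \<le> T k" for N
  proof -
    obtain m :: nat where "(N - T 0) / c \<le> real m"
      using real_arch_simple by blast
    then have "N \<le> T 0 + real m * c"
      using \<open>0 < c\<close> by (simp add: field_simps)
    then show ?thesis
      using reach[of m] by (meson order_trans)
  qed
  show ?thesis
    unfolding filterlim_at_top eventually_sequentially
    using unbounded \<open>incseq T\<close> by (meson incseqD order_trans)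
qed

lemma poisson_arrival_times:
  assumes "prob_space M" "poisson_arrivals M r T" "0 < r"
  shows "AE \<omega> in M. arrival_times (T \<omega>)"
proof -
  interpret prob_space M
    by (rule assms(1))
  define G where "G k \<omega> = T \<omega> (Suc k) - T \<omega> k" for k \<omega>
  have D: "distributed M lborel (G k) (exponential_density r)" for k
    using assms(2) by (simp add: poisson_arrivals_def G_def[abs_def])
  have ind: "indep_vars (\<lambda>_. borel) G UNIV"
    using assms(2) by (simp add: poisson_arrivals_def G_def[abs_def])
  have [measurable]: "G k \<in> borel_measurable M" for k
    using ind by (simp add: indep_vars_def)
  have "AE \<omega> in M. 0 < G k \<omega>" for k
  proof (rule AE_I')
    show "{\<omega> \<in> space M. G k \<omega> \<le> 0} \<in> null_sets M"
      using exponential_distributedD_le[OF D, of 0] assms(3)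
      by (intro null_setsI) (auto simp: emeasure_eq_measure)
  qed auto
  then have pos: "AE \<omega> in M. \<forall>k. 0 < G k \<omega>"
    by (simp add: AE_all_countable)
  have frequent: "AE \<omega> in M. \<forall>n. \<exists>k\<ge>n. 1 < G k \<omega>"
    using exponential_distributedD_le[OF D, of 1] assms(3)
    by (intro AE_frequently_gt_indep[OF ind, of 1 "1 - exp (- r)"]) auto
  have start: "AE \<omega> in M. T \<omega> 0 = 0"
    using assms(2) by (intro AE_I2) (simp add: poisson_arrivals_def)
  from pos frequent start show ?thesis
  proof eventually_elim
    case (elim \<omega>)
    then have "T \<omega> k < T \<omega> (Suc k)" for k
      by (simp add: G_def)
    then have "strict_mono (T \<omega>)" "incseq (T \<omega>)"
      by (simp_all add: strict_mono_Suc_iff incseq_Suc_iff less_imp_le)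
    then show "arrival_times (T \<omega>)"
      using elim filterlim_at_top_of_frequent_gaps[of "T \<omega>" 1]
      by (simp add: arrival_times_def G_def)
  qed
qed

section \<open>Comparison of two initial capitals\<close>

locale pc_path =
  fixes p :: "real \<Rightarrow> real" and T :: "nat \<Rightarrow> real" and a :: real
  assumes cadlag_path: "cadlag p" and arrivals: "arrival_times T"
begin

lemma T_less_Suc: "T k < T (Suc k)"
  using arrivals by (simp add: arrival_times_def strict_mono_Suc_iff)

lemma T_nonneg: "0 \<le> T k"
  using arrivals by (metis arrival_times_def le0 strict_mono_less_eq)

lemma bdd_below_segment: "bdd_below (p ` {T k..T (Suc k)})"
  by (rule bounded_imp_bdd_below[OF cadlag_bounded_Icc[OF cadlag_path T_nonneg]])

definition drawdown_limit :: "nat \<Rightarrow> real" where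
  "drawdown_limit k = Lim (at_left (T (Suc k))) (drawdown p (T k))"

lemma drawdown_limit:
  shows tendsto_drawdown_limit: "(drawdown p (T k) \<longlongrightarrow> drawdown_limit k) (at_left (T (Suc k)))"
    and drawdown_le_limit: "T k \<le> t \<Longrightarrow> t < T (Suc k) \<Longrightarrow> drawdown p (T k) t \<le> drawdown_limit k"
proof -
  obtain D where D: "(drawdown p (T k) \<longlongrightarrow> D) (at_left (T (Suc k)))"
    "\<And>t. T k \<le> t \<Longrightarrow> t < T (Suc k) \<Longrightarrow> drawdown p (T k) t \<le> D"
    using drawdown_left_limit[OF bdd_below_segment[of k] T_less_Suc[of k]] by blast
  moreover have "drawdown_limit k = D"
    unfolding drawdown_limit_def by (rule tendsto_Lim[OF trivial_limit_at_left_real D(1)])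
  ultimately show "(drawdown p (T k) \<longlongrightarrow> drawdown_limit k) (at_left (T (Suc k)))"
    "T k \<le> t \<Longrightarrow> t < T (Suc k) \<Longrightarrow> drawdown p (T k) t \<le> drawdown_limit k"
    by simp_all
qed

definition left_limit :: "nat \<Rightarrow> real" where
  "left_limit k = Lim (at_left (T (Suc k))) p"

lemma tendsto_left_limit: "(p \<longlongrightarrow> left_limit k) (at_left (T (Suc k)))"
proof -
  have "0 < T (Suc k)"
    using T_nonneg[of k] T_less_Suc[of k] by linarith
  then obtain l where "(p \<longlongrightarrow> l) (at_left (T (Suc k)))"
    using cadlag_path unfolding cadlag_def by (meson less_imp_le)
  then show ?thesis
    unfolding left_limit_def by (metis tendsto_Lim trivial_limit_at_left_real)
qed

text \<open>In the notation of the strategy with initial capital \<open>y\<close>: \<open>U_arr y k\<close>, \<open>R_arr y k\<close>,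
  \<open>L_arr y k\<close> are \<open>U(T\<^sub>k)\<close>, \<open>R(T\<^sub>k)\<close>, \<open>L(T\<^sub>k)\<close>; \<open>injection y k t\<close> is \<open>R(t) - R(T\<^sub>k)\<close> for
  \<open>t \<in> [T\<^sub>k, T\<^sub>k\<^sub>+\<^sub>1)\<close>, \<open>injection_limit y k\<close> its left limit at \<open>T\<^sub>k\<^sub>+\<^sub>1\<close>, and
  \<open>U_before y k\<close> is \<open>U(T\<^sub>k\<^sub>+\<^sub>1-)\<close>.\<close>

definition U_arr :: "real \<Rightarrow> nat \<Rightarrow> real" where
  "U_arr y k = fst (pc_state p T a y k)"

definition R_arr :: "real \<Rightarrow> nat \<Rightarrow> real" where
  "R_arr y k = fst (snd (pc_state p T a y k))"

definition L_arr :: "real \<Rightarrow> nat \<Rightarrow> real" where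
  "L_arr y k = snd (snd (pc_state p T a y k))"

definition injection :: "real \<Rightarrow> nat \<Rightarrow> real \<Rightarrow> real" where
  "injection y k t = max 0 (drawdown p (T k) t - U_arr y k)"

definition injection_limit :: "real \<Rightarrow> nat \<Rightarrow> real" where
  "injection_limit y k = max 0 (drawdown_limit k - U_arr y k)"

definition U_before :: "real \<Rightarrow> nat \<Rightarrow> real" where
  "U_before y k = U_arr y k + left_limit k - p (T k) + injection_limit y k"

lemma arr_0 [simp]: "U_arr y 0 = y" "R_arr y 0 = 0" "L_arr y 0 = 0"
  by (simp_all add: U_arr_def R_arr_def L_arr_def)

lemma pc_state_Suc_eq:
  "pc_state p T a y (Suc k) =
     (min (U_before y k) a, R_arr y k + injection_limit y k, L_arr y k + max 0 (U_before y k - a))"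
proof -
  obtain u rr l where st: "pc_state p T a y k = (u, rr, l)"
    by (metis prod_cases3)
  then have arr: "U_arr y k = u" "R_arr y k = rr" "L_arr y k = l"
    by (simp_all add: U_arr_def R_arr_def L_arr_def)
  have "Lim (at_left (T (Suc k))) (seg_U p (T k) (U_arr y k)) = U_before y k"
    unfolding U_before_def injection_limit_def
    by (intro tendsto_Lim trivial_limit_at_left_real seg_U_left_limit bdd_below_segment
        T_less_Suc tendsto_drawdown_limit tendsto_left_limit)
  moreover have "Lim (at_left (T (Suc k))) (seg_R p (T k) (U_arr y k)) = injection_limit y k"
    unfolding injection_limit_def
    by (intro tendsto_Lim trivial_limit_at_left_real seg_R_left_limit bdd_below_segment
        T_less_Suc tendsto_drawdown_limit)
  ultimately show ?thesis
    by (simp add: st arr Let_def)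
qed

lemma arr_Suc:
  "U_arr y (Suc k) = min (U_before y k) a"
  "R_arr y (Suc k) = R_arr y k + injection_limit y k"
  "L_arr y (Suc k) = L_arr y k + max 0 (U_before y k - a)"
  by (simp_all add: pc_state_Suc_eq U_arr_def R_arr_def L_arr_def del: pc_state.simps)

lemma pc_on_segment:
  assumes "T k \<le> t" "t < T (Suc k)"
  shows "pc_U p T a y t = U_arr y k + p t - p (T k) + injection y k t"
    and "pc_R p T a y t = R_arr y k + injection y k t"
    and "pc_L p T a y t = L_arr y k"
proof -
  have idx: "pc_index T t = k"
    using arrivals assms by (intro pc_index_eq) (auto simp: arrival_times_def)
  have "seg_R p (T k) (U_arr y k) t = injection y k t"
    unfolding injection_def using assms
    by (intro seg_R_eq_drawdown[OF bdd_below_segment]) auto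
  then show "pc_U p T a y t = U_arr y k + p t - p (T k) + injection y k t"
    "pc_R p T a y t = R_arr y k + injection y k t" "pc_L p T a y t = L_arr y k"
    by (simp_all add: pc_U_def pc_R_def pc_L_def idx seg_U_def U_arr_def R_arr_def L_arr_def
        case_prod_beta Let_def)
qed

text \<open>The pathwise identity \<open>U = y + X - L + R\<close>; the jumps of the path at arrival times are
  not transmitted, because the strategy restarts from the left limit.\<close>
lemma arr_balance: "U_arr y k + L_arr y k - R_arr y k = y + (\<Sum>j<k. left_limit j - p (T j))"
proof (induction k)
  case (Suc k)
  have "min (U_before y k) a + max 0 (U_before y k - a) = U_before y k"
    by (simp add: min_def max_def)
  then show ?case
    using Suc.IH by (simp add: arr_Suc U_before_def)
qed simp

lemma pc_balance:
  assumes "T k \<le> t" "t < T (Suc k)"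
  shows "pc_U p T a y t + pc_L p T a y t - pc_R p T a y t
           = y + (\<Sum>j<k. left_limit j - p (T j)) + p t - p (T k)"
  using arr_balance[of y k] by (simp add: pc_on_segment[OF assms])

lemma U_before_mono:
  assumes "U_arr y k \<le> U_arr y' k"
  shows "U_before y k \<le> U_before y' k"
proof -
  have "U_arr y k - U_arr y' k \<le> injection_limit y' k - injection_limit y k"
    unfolding injection_limit_def by (rule reflection_gap_bounds(1)[OF assms])
  then show ?thesis
    by (simp add: U_before_def)
qed

lemma U_arr_mono:
  assumes "y \<le> y'"
  shows "U_arr y k \<le> U_arr y' k"
proof (induction k)
  case (Suc k)
  then show ?case
    using U_before_mono by (simp add: arr_Suc min.coboundedI1)
qed (simp add: assms)

context
  fixes y y' :: real
  assumes y_le: "y \<le> y'"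
begin

lemma injection_gap_bounds:
  "U_arr y k - U_arr y' k \<le> injection y' k t - injection y k t"
  "injection y' k t - injection y k t \<le> 0"
  unfolding injection_def using reflection_gap_bounds[OF U_arr_mono[OF y_le]] by blast+

lemma injection_gap_antimono:
  assumes "T k \<le> s" "s \<le> t" "t < T (Suc k)"
  shows "injection y' k t - injection y k t \<le> injection y' k s - injection y k s"
  unfolding injection_def using assms
  by (intro reflection_gap_antimono U_arr_mono y_le drawdown_mono[OF bdd_below_segment]) auto

lemma injection_limit_gap_le:
  assumes "T k \<le> t" "t < T (Suc k)"
  shows "injection_limit y' k - injection_limit y k \<le> injection y' k t - injection y k t"
  unfolding injection_def injection_limit_def
  by (intro reflection_gap_antimono U_arr_mono y_le drawdown_le_limit assms)

text \<open>Both the capital and the injection gap are the gap at the last arrival plus the running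
  injection gap; across an arrival the latter is replaced by its left limit, which bounds it from
  below, and the barrier at \<open>a\<close> can only shrink the capital gap further.\<close>
lemma gap_antimono:
  fixes c :: "nat \<Rightarrow> real" and f :: "real \<Rightarrow> real"
  assumes step: "\<And>k. c (Suc k) \<le> c k + (injection_limit y' k - injection_limit y k)"
    and seg: "\<And>k t. T k \<le> t \<Longrightarrow> t < T (Suc k) \<Longrightarrow> f t = c k + (injection y' k t - injection y k t)"
    and "0 \<le> s" "s \<le> t"
  shows "f t \<le> f s"
proof (rule antimono_by_segments[OF arrivals _ _ assms(3,4)])
  fix k s t assume st: "T k \<le> s" "s \<le> t" "t < T (Suc k)"
  then have "f t = c k + (injection y' k t - injection y k t)"
    "f s = c k + (injection y' k s - injection y k s)"
    by (simp_all add: seg)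
  then show "f t \<le> f s"
    using injection_gap_antimono[OF st] by simp
next
  fix k t assume t: "T k \<le> t" "t < T (Suc k)"
  have "f (T (Suc k)) \<le> c (Suc k)"
    using seg[of "Suc k" "T (Suc k)"] T_less_Suc injection_gap_bounds(2) by simp
  also have "\<dots> \<le> c k + (injection y' k t - injection y k t)"
    using step[of k] injection_limit_gap_le[OF t] by linarith
  finally show "f (T (Suc k)) \<le> f t"
    using seg[OF t] by simp
qed

lemma pc_R_gap_antimono:
  assumes "0 \<le> s" "s \<le> t"
  shows "pc_R p T a y' t - pc_R p T a y t \<le> pc_R p T a y' s - pc_R p T a y s"
  by (rule gap_antimono[where c = "\<lambda>k. R_arr y' k - R_arr y k", OF _ _ assms])
    (simp_all add: arr_Suc pc_on_segment)

lemma pc_U_gap_antimono: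
  assumes "0 \<le> s" "s \<le> t"
  shows "pc_U p T a y' t - pc_U p T a y t \<le> pc_U p T a y' s - pc_U p T a y s"
proof (rule gap_antimono[where c = "\<lambda>k. U_arr y' k - U_arr y k", OF _ _ assms])
  fix k
  have "U_before y k \<le> U_before y' k"
    by (intro U_before_mono U_arr_mono y_le)
  then have "min (U_before y' k) a - min (U_before y k) a \<le> U_before y' k - U_before y k"
    by (simp add: min_def)
  then show "U_arr y' (Suc k) - U_arr y (Suc k)
      \<le> U_arr y' k - U_arr y k + (injection_limit y' k - injection_limit y k)"
    by (simp add: arr_Suc U_before_def)
qed (simp add: pc_on_segment)

lemma pc_L_gap_mono:
  assumes "0 \<le> s" "s \<le> t"
  shows "pc_L p T a y' s - pc_L p T a y s \<le> pc_L p T a y' t - pc_L p T a y t"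
proof -
  have "- (pc_L p T a y' t - pc_L p T a y t) \<le> - (pc_L p T a y' s - pc_L p T a y s)"
  proof (rule antimono_by_segments[OF arrivals _ _ assms])
    fix k t assume t: "T k \<le> t" "t < T (Suc k)"
    have "U_before y k \<le> U_before y' k"
      by (intro U_before_mono U_arr_mono y_le)
    then show "- (pc_L p T a y' (T (Suc k)) - pc_L p T a y (T (Suc k)))
        \<le> - (pc_L p T a y' t - pc_L p T a y t)"
      using pc_on_segment(3)[OF order_refl T_less_Suc[of "Suc k"]] pc_on_segment(3)[OF t]
      by (simp add: arr_Suc max_def)
  next
    fix k s t assume "T k \<le> s" "s \<le> t" "t < T (Suc k)"
    then have "T k \<le> t" "s < T (Suc k)"
      by linarith+
    with \<open>T k \<le> s\<close> \<open>t < T (Suc k)\<close>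
    show "- (pc_L p T a y' t - pc_L p T a y t) \<le> - (pc_L p T a y' s - pc_L p T a y s)"
      by (simp add: pc_on_segment)
  qed
  then show ?thesis
    by simp
qed

lemma pc_U_gap_nonneg:
  assumes "0 \<le> t"
  shows "0 \<le> pc_U p T a y' t - pc_U p T a y t"
proof -
  obtain k where "T k \<le> t" "t < T (Suc k)"
    by (rule arrival_times_segment[OF arrivals assms])
  then show ?thesis
    using injection_gap_bounds(1)[of k t] by (simp add: pc_on_segment)
qed

lemma pc_gap_balance:
  assumes "0 \<le> t"
  shows "(pc_U p T a y' t - pc_U p T a y t) + (pc_L p T a y' t - pc_L p T a y t)
           - (pc_R p T a y' t - pc_R p T a y t) = y' - y"
proof -
  obtain k where "T k \<le> t" "t < T (Suc k)"
    by (rule arrival_times_segment[OF arrivals assms])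
  then show ?thesis
    using pc_balance[of k t y] pc_balance[of k t y'] by simp
qed

lemma pc_gaps_at_0:
  "pc_R p T a y' 0 - pc_R p T a y 0 \<le> 0"
  "pc_L p T a y' 0 - pc_L p T a y 0 = 0"
proof -
  have "T 0 \<le> 0" "0 < T (Suc 0)"
    using arrivals T_less_Suc[of 0] by (simp_all add: arrival_times_def)
  then show "pc_R p T a y' 0 - pc_R p T a y 0 \<le> 0" "pc_L p T a y' 0 - pc_L p T a y 0 = 0"
    using injection_gap_bounds(2)[of 0 0] by (simp_all add: pc_on_segment)
qed

end

end

theorem (in pc_path) pc_comparison:
  assumes "0 \<le> \<epsilon>"
  shows "(\<forall>s t. 0 \<le> s \<longrightarrow> s \<le> t \<longrightarrow>
        pc_R p T a (y + \<epsilon>) t - pc_R p T a y t \<le> pc_R p T a (y + \<epsilon>) s - pc_R p T a y s) \<and>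
     (\<forall>t\<ge>0. - \<epsilon> \<le> pc_R p T a (y + \<epsilon>) t - pc_R p T a y t \<and>
             pc_R p T a (y + \<epsilon>) t - pc_R p T a y t \<le> 0) \<and>
     (\<forall>s t. 0 \<le> s \<longrightarrow> s \<le> t \<longrightarrow>
        pc_U p T a (y + \<epsilon>) t - pc_U p T a y t \<le> pc_U p T a (y + \<epsilon>) s - pc_U p T a y s) \<and>
     (\<forall>t\<ge>0. 0 \<le> pc_U p T a (y + \<epsilon>) t - pc_U p T a y t \<and>
             pc_U p T a (y + \<epsilon>) t - pc_U p T a y t \<le> \<epsilon>) \<and>
     (\<forall>s t. 0 \<le> s \<longrightarrow> s \<le> t \<longrightarrow>
        pc_L p T a (y + \<epsilon>) s - pc_L p T a y s \<le> pc_L p T a (y + \<epsilon>) t - pc_L p T a y t) \<and>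
     (\<forall>t\<ge>0. 0 \<le> pc_L p T a (y + \<epsilon>) t - pc_L p T a y t \<and>
             pc_L p T a (y + \<epsilon>) t - pc_L p T a y t \<le> \<epsilon>)"
proof -
  have le: "y \<le> y + \<epsilon>"
    using assms by simp
  have bounds: "- \<epsilon> \<le> pc_R p T a (y + \<epsilon>) t - pc_R p T a y t \<and>
                  pc_R p T a (y + \<epsilon>) t - pc_R p T a y t \<le> 0"
    "0 \<le> pc_U p T a (y + \<epsilon>) t - pc_U p T a y t \<and> pc_U p T a (y + \<epsilon>) t - pc_U p T a y t \<le> \<epsilon>"
    "0 \<le> pc_L p T a (y + \<epsilon>) t - pc_L p T a y t \<and> pc_L p T a (y + \<epsilon>) t - pc_L p T a y t \<le> \<epsilon>"
    if "0 \<le> t" for t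
    using pc_R_gap_antimono[OF le order_refl that] pc_L_gap_mono[OF le order_refl that]
      pc_gaps_at_0[OF le] pc_U_gap_nonneg[OF le that] pc_gap_balance[OF le that]
    by simp_all
  then show ?thesis
    using pc_R_gap_antimono[OF le] pc_U_gap_antimono[OF le] pc_L_gap_mono[OF le] by blast
qed

theorem mainTheorem3:
  fixes M :: "'w measure" and X :: "'w \<Rightarrow> real \<Rightarrow> real" and T :: "'w \<Rightarrow> nat \<Rightarrow> real"
    and r a x \<epsilon> :: real
  assumes "prob_space M"
    and "levy_process M X"
    and "r > 0"
    and "poisson_arrivals M r T"
    and "prob_space.indep_set M
           (sets (vimage_algebra (space M) X (PiM (UNIV::real set) (\<lambda>_. borel))))
           (sets (vimage_algebra (space M) T (PiM (UNIV::nat set) (\<lambda>_. borel))))"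
    and "a \<ge> 0" and "x \<ge> 0" and "\<epsilon> > 0"
  shows "AE \<omega> in M.
     (\<forall>s t. 0 \<le> s \<longrightarrow> s \<le> t \<longrightarrow>
        pc_R (X \<omega>) (T \<omega>) a (x + \<epsilon>) t - pc_R (X \<omega>) (T \<omega>) a x t
          \<le> pc_R (X \<omega>) (T \<omega>) a (x + \<epsilon>) s - pc_R (X \<omega>) (T \<omega>) a x s) \<and>
     (\<forall>t\<ge>0. - \<epsilon> \<le> pc_R (X \<omega>) (T \<omega>) a (x + \<epsilon>) t - pc_R (X \<omega>) (T \<omega>) a x t \<and>
             pc_R (X \<omega>) (T \<omega>) a (x + \<epsilon>) t - pc_R (X \<omega>) (T \<omega>) a x t \<le> 0) \<and>
     (\<forall>s t. 0 \<le> s \<longrightarrow> s \<le> t \<longrightarrow>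
        pc_U (X \<omega>) (T \<omega>) a (x + \<epsilon>) t - pc_U (X \<omega>) (T \<omega>) a x t
          \<le> pc_U (X \<omega>) (T \<omega>) a (x + \<epsilon>) s - pc_U (X \<omega>) (T \<omega>) a x s) \<and>
     (\<forall>t\<ge>0. 0 \<le> pc_U (X \<omega>) (T \<omega>) a (x + \<epsilon>) t - pc_U (X \<omega>) (T \<omega>) a x t \<and>
             pc_U (X \<omega>) (T \<omega>) a (x + \<epsilon>) t - pc_U (X \<omega>) (T \<omega>) a x t \<le> \<epsilon>) \<and>
     (\<forall>s t. 0 \<le> s \<longrightarrow> s \<le> t \<longrightarrow>
        pc_L (X \<omega>) (T \<omega>) a (x + \<epsilon>) s - pc_L (X \<omega>) (T \<omega>) a x s
          \<le> pc_L (X \<omega>) (T \<omega>) a (x + \<epsilon>) t - pc_L (X \<omega>) (T \<omega>) a x t) \<and>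
     (\<forall>t\<ge>0. 0 \<le> pc_L (X \<omega>) (T \<omega>) a (x + \<epsilon>) t - pc_L (X \<omega>) (T \<omega>) a x t \<and>
             pc_L (X \<omega>) (T \<omega>) a (x + \<epsilon>) t - pc_L (X \<omega>) (T \<omega>) a x t \<le> \<epsilon>)"
proof -
  have "AE \<omega> in M. cadlag (X \<omega>)"
    using assms(2) by (simp add: levy_process_def cadlag_def)
  moreover have "AE \<omega> in M. arrival_times (T \<omega>)"
    by (rule poisson_arrival_times[OF assms(1,4,3)])
  ultimately show ?thesis
  proof eventually_elim
    case (elim \<omega>)
    then interpret pc_path "X \<omega>" "T \<omega>" a
      by unfold_locales
    show ?case
      using pc_comparison assms(8) by simp
  qed
qed

end
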